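(* Let $G=\mathbb{Z}_2\times\mathbb{Z}_4$ and let $\theta$ be a normalised orthomorphism of $G$. Then $|A_{44}|=|A_{42}|=|A_{24}|=2$ and $|A_{22}|=1$.
   Context: $G$ is written multiplicatively with identity $e$; $o(g)$ is the order of $g$. A normalised orthomorphism of $G$ is a bijection $\theta\colon G\to G$ with $\theta(e)=e$ such that $x\mapsto x^{-1}\theta(x)$ is also a bijection of $G$. For such $\theta$: $A_{44}=\{x: o(x)=4, o(\theta(x))=4\}$, $A_{42}=\{x: o(x)=4, o(\theta(x))=2\}$, $A_{24}=\{x: o(x)=2, o(\theta(x))=4\}$, $A_{22}=\{x: o(x)=2, o(\theta(x))=2\}$. *)

theory Defs
  imports "HOL-Algebra.Algebra"
begin

definition Z2xZ4 :: "(int \<times> int) monoid" where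
  "Z2xZ4 = integer_mod_group 2 \<times>\<times> integer_mod_group 4"

definition normalised_orthomorphism :: "('a, 'b) monoid_scheme \<Rightarrow> ('a \<Rightarrow> 'a) \<Rightarrow> bool" where
  "normalised_orthomorphism G \<theta> \<longleftrightarrow>
     bij_betw \<theta> (carrier G) (carrier G) \<and>
     \<theta> \<one>\<^bsub>G\<^esub> = \<one>\<^bsub>G\<^esub> \<and>
     bij_betw (\<lambda>x. inv\<^bsub>G\<^esub> x \<otimes>\<^bsub>G\<^esub> \<theta> x) (carrier G) (carrier G)"

definition A_set :: "('a, 'b) monoid_scheme \<Rightarrow> ('a \<Rightarrow> 'a) \<Rightarrow> nat \<Rightarrow> nat \<Rightarrow> 'a set" where
  "A_set G \<theta> i j = {x \<in> carrier G. group.ord G x = i \<and> group.ord G (\<theta> x) = j}"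

end

theory Submission
  imports Defs
begin

text \<open>The elements of order 4 in \<open>\<int>\<^sub>2 \<times> \<int>\<^sub>4\<close> are those with odd second coordinate, and
  this parity is a homomorphism onto \<open>\<int>\<^sub>2\<close>. Hence among the 8 elements exactly 4 have \<open>x\<close>
  of order 4, 4 have \<open>\<theta> x\<close> of order 4 (\<open>\<theta>\<close> is a bijection), and 4 have \<open>x\<close>, \<open>\<theta> x\<close> of
  different parity (because \<open>x\<^sup>-\<^sup>1 \<theta> x\<close> is a bijection). If \<open>a, b, c, d\<close> count the
  elements by the parities of \<open>(x, \<theta> x)\<close>, then \<open>a + b = a + c = b + c = 4\<close>, so
  \<open>a = b = c = 2\<close> and \<open>d = 2\<close>; removing the identity from the last class leaves 1.\<close>

lemma card_Collect_bij_betw: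
  assumes "bij_betw f S T"
  shows "card {x\<in>S. P (f x)} = card {y\<in>T. P y}"
proof -
  have "bij_betw f {x\<in>S. P (f x)} {y\<in>T. P y}"
    using assms unfolding bij_betw_def inj_on_def by auto
  then show ?thesis by (rule bij_betw_same_card)
qed

lemma card_Collect_conj_split:
  assumes "finite S"
  shows "card {x\<in>S. P x} = card {x\<in>S. P x \<and> Q x} + card {x\<in>S. P x \<and> \<not> Q x}"
proof -
  have "{x\<in>S. P x} = {x\<in>S. P x \<and> Q x} \<union> {x\<in>S. P x \<and> \<not> Q x}" by auto
  then show ?thesis by (simp add: assms card_Un_disjoint disjoint_iff)
qed

lemma card_cells_of_equal_marginals:
  assumes "finite S"
    and "card {x\<in>S. P x} = k" "card {x\<in>S. Q x} = k" "card {x\<in>S. P x \<noteq> Q x} = k"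
  shows "2 * card {x\<in>S. P x \<and> Q x} = k" "2 * card {x\<in>S. P x \<and> \<not> Q x} = k"
    "2 * card {x\<in>S. \<not> P x \<and> Q x} = k" "2 * card {x\<in>S. \<not> P x \<and> \<not> Q x} + 3 * k = 2 * card S"
proof -
  let ?a = "card {x\<in>S. P x \<and> Q x}" and ?b = "card {x\<in>S. P x \<and> \<not> Q x}"
    and ?c = "card {x\<in>S. \<not> P x \<and> Q x}" and ?d = "card {x\<in>S. \<not> P x \<and> \<not> Q x}"
  have "?a + ?b = k"
    using card_Collect_conj_split[OF assms(1), of P Q] assms(2) by simp
  moreover have "?a + ?c = k"
    using card_Collect_conj_split[OF assms(1), of Q P] assms(3) by (simp add: conj_commute)
  moreover have "?b + ?c = k"
  proof -
    have "{x\<in>S. P x \<noteq> Q x \<and> P x} = {x\<in>S. P x \<and> \<not> Q x}"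
      "{x\<in>S. P x \<noteq> Q x \<and> \<not> P x} = {x\<in>S. \<not> P x \<and> Q x}" by auto
    then show ?thesis
      using card_Collect_conj_split[OF assms(1), of "\<lambda>x. P x \<noteq> Q x" P] assms(4) by simp
  qed
  moreover have "?a + ?b + ?c + ?d = card S"
    using card_Collect_conj_split[OF assms(1), of "\<lambda>_. True" P]
      card_Collect_conj_split[OF assms(1), of P Q]
      card_Collect_conj_split[OF assms(1), of "\<lambda>x. \<not> P x" Q]
    by simp
  ultimately show "2 * ?a = k" "2 * ?b = k" "2 * ?c = k" "2 * ?d + 3 * k = 2 * card S"
    by linarith+
qed

lemma normalised_orthomorphism_eq_one_iff:
  assumes "normalised_orthomorphism G \<theta>" "\<one>\<^bsub>G\<^esub> \<in> carrier G" "x \<in> carrier G"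
  shows "\<theta> x = \<one>\<^bsub>G\<^esub> \<longleftrightarrow> x = \<one>\<^bsub>G\<^esub>"
  using assms unfolding normalised_orthomorphism_def bij_betw_def inj_on_def by metis

lemma group_Z2xZ4: "group Z2xZ4"
  unfolding Z2xZ4_def by (intro DirProd_group group_integer_mod_group)

lemma carrier_Z2xZ4:
  "carrier Z2xZ4 = {(0,0),(0,1),(0,2),(0,3),(1,0),(1,1),(1,2),(1,3)}"
proof -
  have "{0..<2::int} = {0,1}" "{0..<4::int} = {0,1,2,3}" by auto
  then show ?thesis unfolding Z2xZ4_def by (simp add: carrier_integer_mod_group)
qed

lemma one_Z2xZ4: "\<one>\<^bsub>Z2xZ4\<^esub> = (0,0)"
  unfolding Z2xZ4_def by simp

lemma pow_Z2xZ4: "(a,b) [^]\<^bsub>Z2xZ4\<^esub> n = ((int n * a) mod 2, (int n * b) mod 4)"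
  unfolding Z2xZ4_def
  by (induction n) (simp_all add: mod_add_left_eq mod_add_right_eq algebra_simps)

lemma ord_Z2xZ4:
  assumes "x \<in> carrier Z2xZ4"
  shows "group.ord Z2xZ4 x = (if odd (snd x) then 4 else if x = (0,0) then 1 else 2)"
proof -
  interpret group Z2xZ4 by (rule group_Z2xZ4)
  have ord_iff: "ord x = d \<longleftrightarrow>
      (\<forall>n. ((int n * fst x) mod 2 = 0 \<and> (int n * snd x) mod 4 = 0) \<longleftrightarrow> d dvd n)" for d
    using ord_unique[OF assms(1)] pow_Z2xZ4[of "fst x" "snd x"] one_Z2xZ4 by simp
  show ?thesis unfolding ord_iff using assms unfolding carrier_Z2xZ4
    by (elim insertE emptyE; hypsubst; simp; presburger)
qed

lemma odd_snd_inv_mult_Z2xZ4: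
  assumes "x \<in> carrier Z2xZ4"
  shows "odd (snd (inv\<^bsub>Z2xZ4\<^esub> x \<otimes>\<^bsub>Z2xZ4\<^esub> y)) \<longleftrightarrow> odd (snd x) \<noteq> odd (snd y)"
proof -
  have "inv\<^bsub>Z2xZ4\<^esub> x = ((- fst x) mod 2, (- snd x) mod 4)"
    using assms unfolding Z2xZ4_def by (cases x) (simp add: carrier_integer_mod_group)
  then show ?thesis unfolding Z2xZ4_def mult_DirProd' by simp presburger
qed

lemma normalised_orthomorphism_Z2xZ4_parity_cells:
  fixes \<theta> :: "int \<times> int \<Rightarrow> int \<times> int"
  assumes "normalised_orthomorphism Z2xZ4 \<theta>"
  defines "S \<equiv> carrier Z2xZ4"
  shows "card {x\<in>S. odd (snd x) \<and> odd (snd (\<theta> x))} = 2"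
    "card {x\<in>S. odd (snd x) \<and> even (snd (\<theta> x))} = 2"
    "card {x\<in>S. even (snd x) \<and> odd (snd (\<theta> x))} = 2"
    "card {x\<in>S. even (snd x) \<and> even (snd (\<theta> x))} = 2"
proof -
  let ?P = "\<lambda>x::int \<times> int. odd (snd x)"
  have \<theta>: "bij_betw \<theta> S S" and \<phi>: "bij_betw (\<lambda>x. inv\<^bsub>Z2xZ4\<^esub> x \<otimes>\<^bsub>Z2xZ4\<^esub> \<theta> x) S S"
    using assms(1) unfolding normalised_orthomorphism_def S_def by auto
  have "{x\<in>S. ?P x} = {(0,1),(0,3),(1,1),(1,3)}"
    unfolding S_def carrier_Z2xZ4 by auto
  then have card_P: "card {x\<in>S. ?P x} = 4" by simp
  have "card {x\<in>S. ?P x \<noteq> ?P (\<theta> x)} = card {x\<in>S. ?P (inv\<^bsub>Z2xZ4\<^esub> x \<otimes>\<^bsub>Z2xZ4\<^esub> \<theta> x)}"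
    unfolding S_def by (simp add: odd_snd_inv_mult_Z2xZ4 cong: conj_cong)
  then show "card {x\<in>S. ?P x \<and> ?P (\<theta> x)} = 2" "card {x\<in>S. ?P x \<and> even (snd (\<theta> x))} = 2"
    "card {x\<in>S. even (snd x) \<and> ?P (\<theta> x)} = 2"
    "card {x\<in>S. even (snd x) \<and> even (snd (\<theta> x))} = 2"
    using card_cells_of_equal_marginals[of S ?P 4 "\<lambda>x. ?P (\<theta> x)"] card_P
      card_Collect_bij_betw[OF \<theta>, of ?P] card_Collect_bij_betw[OF \<phi>, of ?P]
    by (simp_all add: S_def carrier_Z2xZ4)
qed

lemma A_set_Z2xZ4:
  fixes \<theta> :: "int \<times> int \<Rightarrow> int \<times> int"
  assumes "normalised_orthomorphism Z2xZ4 \<theta>"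
  defines "S \<equiv> carrier Z2xZ4"
  shows "A_set Z2xZ4 \<theta> 4 4 = {x\<in>S. odd (snd x) \<and> odd (snd (\<theta> x))}"
    "A_set Z2xZ4 \<theta> 4 2 = {x\<in>S. odd (snd x) \<and> even (snd (\<theta> x))}"
    "A_set Z2xZ4 \<theta> 2 4 = {x\<in>S. even (snd x) \<and> odd (snd (\<theta> x))}"
    "A_set Z2xZ4 \<theta> 2 2 = {x\<in>S. even (snd x) \<and> even (snd (\<theta> x))} - {(0,0)}"
proof -
  have \<theta>_zero: "x \<in> S \<Longrightarrow> \<theta> x = (0,0) \<longleftrightarrow> x = (0,0)" for x
    using normalised_orthomorphism_eq_one_iff[OF assms(1)] unfolding one_Z2xZ4 S_def
    by (simp add: carrier_Z2xZ4)
  have "x \<in> S \<Longrightarrow> \<theta> x \<in> S" for x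
    using assms(1) unfolding normalised_orthomorphism_def S_def by (auto dest: bij_betwE)
  then have ord_\<theta>: "group.ord Z2xZ4 (\<theta> x) =
      (if odd (snd (\<theta> x)) then 4 else if x = (0,0) then 1 else 2)" if "x \<in> S" for x
    using ord_Z2xZ4 \<theta>_zero[OF that] that unfolding S_def by simp
  have "A_set Z2xZ4 \<theta> i j =
      {x\<in>S. (if odd (snd x) then 4 else if x = (0,0) then 1 else 2) = i \<and>
            (if odd (snd (\<theta> x)) then 4 else if x = (0,0) then 1 else 2) = j}" for i j
    unfolding A_set_def S_def[symmetric]
    by (intro Collect_cong conj_cong refl) (simp_all add: ord_\<theta> ord_Z2xZ4 S_def)
  then show "A_set Z2xZ4 \<theta> 4 4 = {x\<in>S. odd (snd x) \<and> odd (snd (\<theta> x))}"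
    "A_set Z2xZ4 \<theta> 4 2 = {x\<in>S. odd (snd x) \<and> even (snd (\<theta> x))}"
    "A_set Z2xZ4 \<theta> 2 4 = {x\<in>S. even (snd x) \<and> odd (snd (\<theta> x))}"
    "A_set Z2xZ4 \<theta> 2 2 = {x\<in>S. even (snd x) \<and> even (snd (\<theta> x))} - {(0,0)}"
    using \<theta>_zero[of "(0,0)"] by (auto simp: S_def carrier_Z2xZ4)
qed

theorem corollary1:
  fixes \<theta> :: "int \<times> int \<Rightarrow> int \<times> int"
  assumes "normalised_orthomorphism Z2xZ4 \<theta>"
  shows "card (A_set Z2xZ4 \<theta> 4 4) = 2 \<and> card (A_set Z2xZ4 \<theta> 4 2) = 2 \<and>
         card (A_set Z2xZ4 \<theta> 2 4) = 2 \<and> card (A_set Z2xZ4 \<theta> 2 2) = 1"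
proof -
  have "\<theta> (0,0) = (0,0)"
    using assms unfolding normalised_orthomorphism_def one_Z2xZ4 by simp
  then have "(0,0) \<in> {x\<in>carrier Z2xZ4. even (snd x) \<and> even (snd (\<theta> x))}"
    by (simp add: carrier_Z2xZ4)
  then show ?thesis
    using A_set_Z2xZ4[OF assms] normalised_orthomorphism_Z2xZ4_parity_cells[OF assms]
    by (simp add: card_Diff_singleton)
qed

end
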